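(* Consider any fixed training set $S_{\mathrm{e2e}}=\{(x^{(i)},y^{(i)}):i\in[m]\}$ with $y^{(i)}=h_*(x^{(i)})$ for some $h_*\in\mathrm{e2e}^T(\mathcal F)$. There is a universal constant $c>0$ such that for any $\delta\in(0,1)$, the Boosting Algorithm invoked with per-thinker budget $\mathsf M_\star=c\,\mathrm{VCdim}(\mathrm{e2e}^T(\mathcal F))$, with the thinkers $f_{k,\ell}$ chosen adversarially (each $f_{k,\ell}\in\mathcal F$ with $\mathrm{e2e}^T_{f_{k,\ell}}\equiv h_*$, possibly depending on the whole history and on the current sampled index set $\mathcal S_{k,\ell}$), satisfies, with probability at least $1-\delta/2$ over its internal randomness of subsampling, simultaneously for all $k\in[K]$: $$\epsilon_k:=\Pr_{i\sim D^{(k)}}\big[\mathrm{e2e}^T_{\hat f_k}(x^{(i)})\ne h_*(x^{(i)})\big]\le0.25.$$ Moreover, in the relaxed protocol where each $f_{k,\ell}$ is fixed by the adversary before observing $\mathcal S_{k,\ell}$, the same guarantee holds with $\mathsf M_\star=c\,\mathrm{VCdim}(\mathcal L^T_{\mathrm{CoT}}(\mathcal F))=O(\mathrm{VCdim}(\mathcal F)\log T)$.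
   Context: Autoregressive generation: for $f:\{0,1\}^*\to\{0,1\}$, $\bar f(x)=(x,f(x))$; $\mathrm{e2e}^T_f(x)$ is the last bit of $\bar f^{\circ T}(x)$ and $\mathrm{CoT}^T_f(x)=(\mathrm{e2e}^1_f(x),\dots,\mathrm{e2e}^T_f(x))$; $\mathrm{e2e}^T(\mathcal F)=\{\mathrm{e2e}^T_f:f\in\mathcal F\}$. $\mathcal L^T_{\mathrm{CoT}}(\mathcal F)=\{(x,z)\mapsto\mathbb 1\{z\ne\mathrm{CoT}^T_f(x)\}:f\in\mathcal F\}$; $\mathrm{VCdim}(\mathcal F)$ is on $\mathcal X\times\{0,1\}^T$. Boosting Algorithm (input $S_{\mathrm{e2e}}$, $K$, $\mathsf M_\star$, $\delta$): $D^{(1)}$ uniform on $[m]$. For $k=1,\dots,K$: for $\ell=1,\dots,\log(2K/\delta)$: draw $\mathcal S_{k,\ell}$ consisting of $\mathsf M_\star$ indices i.i.d. from $D^{(k)}$; obtain $\mathrm{CoT}^T_{f_{k,\ell}}(x^{(i)})$ for $i\in\mathcal S_{k,\ell}$ from an adversarially chosen thinker $f_{k,\ell}$; find $\hat f_{k,\ell}\in\mathcal F$ whose CoTs agree with all observed CoTs; let $\epsilon_{k,\ell}=\sum_iD^{(k)}_i\mathbb 1[\mathrm{e2e}^T_{\hat f_{k,\ell}}(x^{(i)})\ne y^{(i)}]$ and stop the inner loop if $\epsilon_{k,\ell}\le0.25$. $\hat f_k$ is the last $\hat f_{k,\ell}$. If its error $\epsilon_k=0$ the algorithm stops; otherwise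 $\alpha_k=\frac12\log\frac{1-\epsilon_k}{\epsilon_k}$ and $D^{(k+1)}_i\propto D^{(k)}_ie^{\pm\alpha_k}$ ($+$ if $\hat f_k$ errs end-to-end on $i$, $-$ otherwise), normalized. *)

theory Defs
  imports "HOL-Probability.Probability"
begin

type_synonym thinker = "bool list \<Rightarrow> bool"
(* history of all previous inner iterations: (sampled index list S_{k,l}, thinker f_{k,l}, learned f^_{k,l}) *)
type_synonym history = "(nat list \<times> thinker \<times> thinker) list"

definition fbar :: "thinker \<Rightarrow> bool list \<Rightarrow> bool list" where
  "fbar f x = x @ [f x]"

definition e2e :: "nat \<Rightarrow> thinker \<Rightarrow> bool list \<Rightarrow> bool" where
  "e2e T f x = last ((fbar f ^^ T) x)"

definition CoT :: "nat \<Rightarrow> thinker \<Rightarrow> bool list \<Rightarrow> bool list" where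
  "CoT T f x = map (\<lambda>t. e2e t f x) [1..<Suc T]"

definition CoT_loss_class :: "nat \<Rightarrow> thinker set \<Rightarrow> (bool list \<times> bool list \<Rightarrow> bool) set" where
  "CoT_loss_class T F = {(\<lambda>(x, z). z \<noteq> CoT T f x) | f. f \<in> F}"

definition shatters :: "('a \<Rightarrow> bool) set \<Rightarrow> 'a set \<Rightarrow> bool" where
  "shatters H C \<longleftrightarrow> (\<forall>B\<subseteq>C. \<exists>h\<in>H. \<forall>x\<in>C. h x \<longleftrightarrow> x \<in> B)"

definition VCdim :: "'a set \<Rightarrow> ('a \<Rightarrow> bool) set \<Rightarrow> enat" where
  "VCdim A H = (SUP C \<in> {C. finite C \<and> C \<subseteq> A \<and> shatters H C}. enat (card C))"

fun iid_pmf :: "nat \<Rightarrow> 'a pmf \<Rightarrow> 'a list pmf" where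
  "iid_pmf 0 D = return_pmf []"
| "iid_pmf (Suc n) D = bind_pmf D (\<lambda>i. map_pmf (Cons i) (iid_pmf n D))"

definition consistent :: "nat \<Rightarrow> thinker \<Rightarrow> (bool list \<times> bool list) list \<Rightarrow> bool" where
  "consistent T g obs \<longleftrightarrow> (\<forall>(x, z)\<in>set obs. CoT T g x = z)"

definition e2e_err :: "nat \<Rightarrow> (nat \<Rightarrow> bool list) \<Rightarrow> (nat \<Rightarrow> bool) \<Rightarrow> nat pmf \<Rightarrow> thinker \<Rightarrow> real" where
  "e2e_err T xs ys D g = measure_pmf.prob D {i. e2e T g (xs i) \<noteq> ys i}"

(* one inner iteration: draw S ~ D^M, adversary picks thinker, learner picks a consistent hypothesis *)
definition boost_try ::
  "nat \<Rightarrow> nat \<Rightarrow> (nat \<Rightarrow> bool list) \<Rightarrow> (nat \<Rightarrow> bool) \<Rightarrow> (history \<Rightarrow> nat list \<Rightarrow> thinker)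
   \<Rightarrow> (history \<Rightarrow> (bool list \<times> bool list) list \<Rightarrow> thinker) \<Rightarrow> nat pmf \<Rightarrow> history
   \<Rightarrow> (history \<times> thinker \<times> real) pmf" where
  "boost_try T M xs ys adv sel D hist =
     map_pmf (\<lambda>S. let f = adv hist S;
                      obs = map (\<lambda>i. (xs i, CoT T f (xs i))) S;
                      g = sel hist obs
                  in (hist @ [(S, f, g)], g, e2e_err T xs ys D g))
       (iid_pmf M D)"

(* inner loop with at most n tries; stops as soon as the error is <= 1/4;
   returns the last learned hypothesis and its error (case n = 0 is never invoked) *)
fun boost_inner ::
  "nat \<Rightarrow> nat \<Rightarrow> (nat \<Rightarrow> bool list) \<Rightarrow> (nat \<Rightarrow> bool) \<Rightarrow> (history \<Rightarrow> nat list \<Rightarrow> thinker)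
   \<Rightarrow> (history \<Rightarrow> (bool list \<times> bool list) list \<Rightarrow> thinker) \<Rightarrow> nat \<Rightarrow> nat pmf \<Rightarrow> history
   \<Rightarrow> (history \<times> thinker \<times> real) pmf" where
  "boost_inner T M xs ys adv sel 0 D hist = return_pmf (hist, (\<lambda>_. False), 1)"
| "boost_inner T M xs ys adv sel (Suc n) D hist =
     bind_pmf (boost_try T M xs ys adv sel D hist)
       (\<lambda>(h', g, e). if e \<le> 1/4 \<or> n = 0 then return_pmf (h', g, e)
                     else boost_inner T M xs ys adv sel n D h')"

(* AdaBoost reweighting with alpha = 1/2 log((1-eps)/eps), normalized over [m] *)
definition boost_update ::
  "nat \<Rightarrow> nat \<Rightarrow> (nat \<Rightarrow> bool list) \<Rightarrow> (nat \<Rightarrow> bool) \<Rightarrow> nat pmf \<Rightarrow> thinker \<Rightarrow> real \<Rightarrow> nat pmf" where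
  "boost_update T m xs ys D g \<epsilon> =
     (let \<alpha> = ln ((1 - \<epsilon>) / \<epsilon>) / 2;
          w = (\<lambda>i. pmf D i * exp (if e2e T g (xs i) \<noteq> ys i then \<alpha> else - \<alpha>));
          Z = (\<Sum>j<m. w j)
      in embed_pmf (\<lambda>i. w i / Z))"

fun boost_outer ::
  "nat \<Rightarrow> nat \<Rightarrow> nat \<Rightarrow> (nat \<Rightarrow> bool list) \<Rightarrow> (nat \<Rightarrow> bool) \<Rightarrow> (history \<Rightarrow> nat list \<Rightarrow> thinker)
   \<Rightarrow> (history \<Rightarrow> (bool list \<times> bool list) list \<Rightarrow> thinker) \<Rightarrow> nat \<Rightarrow> nat \<Rightarrow> nat pmf \<Rightarrow> history
   \<Rightarrow> real list pmf" where
  "boost_outer T m M xs ys adv sel L 0 D hist = return_pmf []"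
| "boost_outer T m M xs ys adv sel L (Suc n) D hist =
     bind_pmf (boost_inner T M xs ys adv sel L D hist)
       (\<lambda>(h', g, e). if e = 0 then return_pmf [e]
                     else map_pmf (Cons e)
                            (boost_outer T m M xs ys adv sel L n (boost_update T m xs ys D g e) h'))"

(* the Boosting Algorithm: distribution of the list (eps_1, ..., eps_k) of rounds executed *)
definition boost ::
  "nat \<Rightarrow> nat \<Rightarrow> (nat \<Rightarrow> bool list) \<Rightarrow> (nat \<Rightarrow> bool) \<Rightarrow> nat \<Rightarrow> real \<Rightarrow> nat
   \<Rightarrow> (history \<Rightarrow> nat list \<Rightarrow> thinker) \<Rightarrow> (history \<Rightarrow> (bool list \<times> bool list) list \<Rightarrow> thinker)
   \<Rightarrow> real list pmf" where
  "boost T m xs ys K \<delta> M adv sel =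
     boost_outer T m M xs ys adv sel (nat \<lceil>ln (2 * real K / \<delta>)\<rceil>) K (pmf_of_set {..<m}) []"

end

(* Every hypothesis returned by the learner reproduces the observed chains of thought, so it
   agrees end to end with h on all subsampled indices. A round therefore fails only if some error
   indicator  i |-> [e2e of the hypothesis at x_i differs from h(x_i)]  of D-mass above 1/4 misses
   all M = 160 d sampled indices, where the indicators range over a class of VC dimension at most
   d = VCdim(e2e F). By the epsilon-net theorem (symmetrization with a ghost sample, random swaps of
   the two halves, Sauer-Shelah) this has probability at most 1/e. If the thinker is fixed before
   the sample, all chains of thought of a try come from one thinker f0 and the indicators are
   dominated by CoT losses at the fixed points (x_i, CoT f0 x_i), so d = VCdim(L_CoT) suffices.
   Each round makes up to log(2K/delta) independent tries, hence fails with probability at most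
   delta/(2K), and a union bound over the K rounds gives the claim.
   Finally, the CoT loss of a thinker on n points (x, z) is determined by its values on the n T
   prefixes x @ take t z, so Sauer-Shelah gives 2^n <= (e n T / d)^d with d = VCdim F, whence
   n <= 12 d ln T. *)

theory Submission
  imports Defs "HOL-Combinatorics.Permutations"
begin

section \<open>Shattering and the Sauer--Shelah lemma\<close>

definition shatters_sets :: "'a set set \<Rightarrow> 'a set \<Rightarrow> bool" where
  "shatters_sets \<A> B \<longleftrightarrow> (\<forall>B'\<subseteq>B. \<exists>A\<in>\<A>. A \<inter> B = B')"

lemma card_remove_image_add_card_pairs:
  assumes "finite \<A>"
  shows "card ((\<lambda>A. A - {x}) ` \<A>) + card {A\<in>\<A>. x \<notin> A \<and> insert x A \<in> \<A>} = card \<A>"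
proof -
  define N where "N = {A\<in>\<A>. x \<notin> A}"
  define R where "R = (\<lambda>A. A - {x}) ` {A\<in>\<A>. x \<in> A}"
  have "(\<lambda>A. A - {x}) ` \<A> = N \<union> R"
  proof (intro equalityI subsetI)
    fix A' assume "A' \<in> (\<lambda>A. A - {x}) ` \<A>"
    then obtain A where "A \<in> \<A>" "A' = A - {x}" by blast
    then show "A' \<in> N \<union> R" by (cases "x \<in> A") (auto simp: N_def R_def)
  next
    fix A' assume "A' \<in> N \<union> R"
    then show "A' \<in> (\<lambda>A. A - {x}) ` \<A>" by (auto simp: N_def R_def intro: image_eqI[where x=A'])
  qed
  moreover have "{A\<in>\<A>. x \<notin> A \<and> insert x A \<in> \<A>} = N \<inter> R"
  proof (intro equalityI subsetI)
    fix A assume "A \<in> {A\<in>\<A>. x \<notin> A \<and> insert x A \<in> \<A>}"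
    then show "A \<in> N \<inter> R" by (auto simp: N_def R_def intro: image_eqI[where x="insert x A"])
  next
    fix A assume "A \<in> N \<inter> R"
    then obtain A' where "A \<in> \<A>" "x \<notin> A" "A' \<in> \<A>" "x \<in> A'" "A = A' - {x}"
      by (auto simp: N_def R_def)
    then show "A \<in> {A\<in>\<A>. x \<notin> A \<and> insert x A \<in> \<A>}" by (simp add: insert_absorb)
  qed
  moreover have "card R = card {A\<in>\<A>. x \<in> A}"
    unfolding R_def by (rule card_image) (auto simp: inj_on_def)
  moreover have "card \<A> = card N + card {A\<in>\<A>. x \<in> A}"
  proof -
    have "\<A> = N \<union> {A\<in>\<A>. x \<in> A}" "N \<inter> {A\<in>\<A>. x \<in> A} = {}" by (auto simp: N_def)
    then show ?thesis using assms by (metis card_Un_disjoint finite_Un)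
  qed
  ultimately show ?thesis
    using card_Un_Int[of N R] assms by (simp add: N_def R_def)
qed

lemma shatters_sets_remove_image:
  assumes "shatters_sets ((\<lambda>A. A - {x}) ` \<A>) B" "x \<notin> B"
  shows "shatters_sets \<A> B"
  unfolding shatters_sets_def
proof (intro allI impI)
  fix B' assume "B' \<subseteq> B"
  then obtain A where "A \<in> \<A>" "(A - {x}) \<inter> B = B'"
    using assms(1) by (auto simp: shatters_sets_def)
  then show "\<exists>A\<in>\<A>. A \<inter> B = B'" using assms(2) by blast
qed

lemma shatters_sets_insert_pairs:
  assumes "shatters_sets {A\<in>\<A>. x \<notin> A \<and> insert x A \<in> \<A>} B" "x \<notin> B"
  shows "shatters_sets \<A> (insert x B)"
  unfolding shatters_sets_def
proof (intro allI impI)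
  fix B' assume B': "B' \<subseteq> insert x B"
  then have "B' - {x} \<subseteq> B" by blast
  then obtain A where A: "A \<in> \<A>" "x \<notin> A" "insert x A \<in> \<A>" "A \<inter> B = B' - {x}"
    using assms(1) unfolding shatters_sets_def by blast
  show "\<exists>A\<in>\<A>. A \<inter> insert x B = B'"
  proof (cases "x \<in> B'")
    case True
    then show ?thesis using A B' by (intro bexI[of _ "insert x A"]) auto
  next
    case False
    then show ?thesis using A B' by (intro bexI[of _ A]) auto
  qed
qed

lemma Pajor_card_le_card_shattered:
  assumes "finite C" "\<A> \<subseteq> Pow C"
  shows "card \<A> \<le> card {B. B \<subseteq> C \<and> shatters_sets \<A> B}"
  using assms
proof (induction C arbitrary: \<A> rule: finite_induct)
  case empty
  show ?case
  proof (cases "\<A> = {}")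
    case False
    with empty have "\<A> = {{}}" by auto
    then have "{B. B \<subseteq> {} \<and> shatters_sets \<A> B} = {{}}" by (auto simp: shatters_sets_def)
    then show ?thesis using \<open>\<A> = {{}}\<close> by simp
  qed simp
next
  case (insert x C)
  let ?A0 = "(\<lambda>A. A - {x}) ` \<A>" and ?A1 = "{A\<in>\<A>. x \<notin> A \<and> insert x A \<in> \<A>}"
  let ?S = "\<lambda>\<B> C. {B. B \<subseteq> C \<and> shatters_sets \<B> B}"
  have "finite \<A>" using insert.hyps(1) insert.prems finite_subset by blast
  have "?S ?A0 C \<union> insert x ` ?S ?A1 C \<subseteq> ?S \<A> (insert x C)"
    using insert.hyps(2) by (auto intro: shatters_sets_remove_image shatters_sets_insert_pairs)
  then have "card (?S ?A0 C \<union> insert x ` ?S ?A1 C) \<le> card (?S \<A> (insert x C))"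
    using insert.hyps(1) by (intro card_mono) auto
  moreover have "?S ?A0 C \<inter> insert x ` ?S ?A1 C = {}" using insert.hyps(2) by auto
  moreover have "card (insert x ` ?S ?A1 C) = card (?S ?A1 C)"
    using insert.hyps(2) by (intro card_image) (auto simp: inj_on_def)
  moreover have "card ?A0 \<le> card (?S ?A0 C)" "card ?A1 \<le> card (?S ?A1 C)"
    using insert.prems by (auto intro!: insert.IH)
  ultimately show ?case
    using card_remove_image_add_card_pairs[OF \<open>finite \<A>\<close>, of x] insert.hyps(1)
    by (simp add: card_Un_disjoint)
qed

definition traces :: "('a \<Rightarrow> bool) set \<Rightarrow> 'a set \<Rightarrow> 'a set set" where
  "traces H C = (\<lambda>h. {x\<in>C. h x}) ` H"

lemma finite_traces: "finite C \<Longrightarrow> finite (traces H C)"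
  by (rule finite_subset[of _ "Pow C"]) (auto simp: traces_def)

lemma traces_eq_Pow_if_shatters:
  assumes "shatters H C"
  shows "traces H C = Pow C"
proof
  show "Pow C \<subseteq> traces H C"
  proof
    fix B assume "B \<in> Pow C"
    then obtain h where "h \<in> H" "\<forall>x\<in>C. h x = (x \<in> B)" using assms unfolding shatters_def by blast
    moreover have "B = {x\<in>C. h x}" using calculation \<open>B \<in> Pow C\<close> by auto
    ultimately show "B \<in> traces H C" by (auto simp: traces_def)
  qed
qed (auto simp: traces_def)

lemma shatters_sets_traces_iff:
  assumes "B \<subseteq> C"
  shows "shatters_sets (traces H C) B \<longleftrightarrow> shatters H B"
proof -
  have "{x\<in>C. h x} \<inter> B = B' \<longleftrightarrow> (\<forall>x\<in>B. h x \<longleftrightarrow> x \<in> B')" if "B' \<subseteq> B" for h B'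
    using assms that by blast
  then show ?thesis by (simp add: shatters_sets_def shatters_def traces_def image_iff)
qed

lemma card_subsets_card_le:
  assumes "finite C"
  shows "card {B. B \<subseteq> C \<and> card B \<le> d} = (\<Sum>i\<le>d. card C choose i)"
proof -
  have "{B. B \<subseteq> C \<and> card B \<le> d} = (\<Union>i\<le>d. {B. B \<subseteq> C \<and> card B = i})" by blast
  also have "card \<dots> = (\<Sum>i\<le>d. card {B. B \<subseteq> C \<and> card B = i})"
    using assms by (intro card_UN_disjoint) auto
  also have "\<dots> = (\<Sum>i\<le>d. card C choose i)" using n_subsets[OF assms] by simp
  finally show ?thesis .
qed

theorem Sauer_Shelah:
  assumes "finite C" "\<And>B. B \<subseteq> C \<Longrightarrow> shatters H B \<Longrightarrow> card B \<le> d"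
  shows "card (traces H C) \<le> (\<Sum>i\<le>d. card C choose i)"
proof -
  have "card (traces H C) \<le> card {B. B \<subseteq> C \<and> shatters_sets (traces H C) B}"
    by (rule Pajor_card_le_card_shattered[OF assms(1)]) (auto simp: traces_def)
  also have "\<dots> \<le> card {B. B \<subseteq> C \<and> card B \<le> d}"
    using assms by (intro card_mono) (auto simp: shatters_sets_traces_iff)
  also have "\<dots> = (\<Sum>i\<le>d. card C choose i)" by (rule card_subsets_card_le[OF assms(1)])
  finally show ?thesis .
qed

lemma sum_binomial_le_exp_pow:
  assumes "1 \<le> d" "d \<le> N"
  shows "real (\<Sum>i\<le>d. N choose i) \<le> (exp 1 * N / d) ^ d"
proof -
  define x where "x = real d / N"
  have x: "0 < x" "x \<le> 1" using assms by (auto simp: x_def)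
  have "x ^ d * real (\<Sum>i\<le>d. N choose i) = (\<Sum>i\<le>d. real (N choose i) * x ^ d)"
    by (simp add: sum_distrib_left mult.commute)
  also have "\<dots> \<le> (\<Sum>i\<le>d. real (N choose i) * x ^ i)"
    using x by (intro sum_mono mult_left_mono power_decreasing) auto
  also have "\<dots> \<le> (\<Sum>i\<le>N. real (N choose i) * x ^ i)"
    using assms x by (intro sum_mono2) auto
  also have "\<dots> = (x + 1) ^ N" by (simp add: binomial_ring mult.commute)
  also have "\<dots> \<le> exp x ^ N"
    using x by (intro power_mono) (auto simp: add.commute exp_ge_add_one_self)
  also have "\<dots> = exp 1 ^ d" using assms by (simp add: x_def flip: exp_of_nat_mult)
  finally have "real (\<Sum>i\<le>d. N choose i) \<le> exp 1 ^ d / x ^ d"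
    using x by (simp add: field_simps)
  also have "\<dots> = (exp 1 * N / d) ^ d" using assms by (simp add: x_def power_divide field_simps)
  finally show ?thesis .
qed

lemma card_le_VCdim:
  assumes "VCdim A H \<noteq> \<infinity>" "finite C" "C \<subseteq> A" "shatters H C"
  shows "card C \<le> the_enat (VCdim A H)"
proof -
  have "enat (card C) \<le> VCdim A H" unfolding VCdim_def
    using assms by (intro SUP_upper) auto
  then show ?thesis using assms(1) by (cases "VCdim A H") auto
qed

lemma VCdim_le_if_card_shattered_le:
  assumes "\<And>C. finite C \<Longrightarrow> C \<subseteq> A \<Longrightarrow> shatters H C \<Longrightarrow> card C \<le> n"
  shows "VCdim A H \<noteq> \<infinity>" "the_enat (VCdim A H) \<le> n"
proof -
  have "VCdim A H \<le> enat n" unfolding VCdim_def using assms by (intro SUP_least) auto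
  then show "VCdim A H \<noteq> \<infinity>" "the_enat (VCdim A H) \<le> n"
    by (cases "VCdim A H"; auto)+
qed

section \<open>Products of distributions\<close>

lemma integrable_measure_pmf_bounded:
  fixes f :: "'a \<Rightarrow> real"
  assumes "\<And>x. \<bar>f x\<bar> \<le> B"
  shows "integrable (measure_pmf p) f"
  by (rule measure_pmf.integrable_const_bound[where B=B]) (use assms in auto)

lemma prob_bind_pmf:
  "measure_pmf.prob (bind_pmf p f) A = (\<integral>x. measure_pmf.prob (f x) A \<partial>p)"
proof -
  have "ennreal (measure_pmf.prob (bind_pmf p f) A) = emeasure (bind_pmf p f) A"
    by (simp add: measure_pmf.emeasure_eq_measure)
  also have "\<dots> = (\<integral>\<^sup>+x. ennreal (measure_pmf.prob (f x) A) \<partial>p)"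
    by (subst emeasure_bind_pmf) (simp add: measure_pmf.emeasure_eq_measure)
  also have "\<dots> = ennreal (\<integral>x. measure_pmf.prob (f x) A \<partial>p)"
    by (intro nn_integral_eq_integral integrable_measure_pmf_bounded[where B=1]) auto
  finally show ?thesis by (simp add: ennreal_inj)
qed

lemma iid_pmf_eq_replicate_pmf: "iid_pmf n D = replicate_pmf n D"
  by (induction n) (simp_all add: map_pmf_def)

lemma pmf_replicate_pmf:
  "pmf (replicate_pmf n D) xs = (if length xs = n then prod_list (map (pmf D) xs) else 0)"
proof (induction n arbitrary: xs)
  case 0
  then show ?case by (cases xs) (auto simp: pmf_return)
next
  case (Suc n)
  have "pmf (replicate_pmf (Suc n) D) xs = (\<integral>x. pmf (map_pmf (Cons x) (replicate_pmf n D)) xs \<partial>D)"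
    by (simp add: map_pmf_def pmf_bind)
  also have "\<dots> = (case xs of [] \<Rightarrow> 0 | y # ys \<Rightarrow> pmf D y * pmf (replicate_pmf n D) ys)"
  proof (cases xs)
    case Nil
    have "pmf (map_pmf (Cons x) (replicate_pmf n D)) [] = 0" for x
      by (auto simp: pmf_eq_0_set_pmf)
    then show ?thesis by (simp add: Nil)
  next
    case (Cons y ys)
    have "pmf (map_pmf (Cons x) (replicate_pmf n D)) (y # ys) = indicator {y} x * pmf (replicate_pmf n D) ys" for x
      by (cases "x = y") (auto simp: pmf_map_inj' pmf_eq_0_set_pmf)
    then show ?thesis by (simp add: Cons measure_pmf_single)
  qed
  finally show ?case using Suc.IH by (cases xs) auto
qed

lemma replicate_pmf_map_pmf: "replicate_pmf n (map_pmf g D) = map_pmf (map g) (replicate_pmf n D)"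
  by (induction n) (simp_all add: map_pmf_def bind_assoc_pmf bind_return_pmf)

lemma map_pmf_replicate_pmf_involution:
  assumes "\<And>w. f (f w) = w" "\<And>w. mset (f w) = mset w"
  shows "map_pmf f (replicate_pmf n D) = replicate_pmf n D"
proof (rule pmf_eqI)
  fix w
  have "inj f" by (metis assms(1) injI)
  have "pmf (map_pmf f (replicate_pmf n D)) w = pmf (map_pmf f (replicate_pmf n D)) (f (f w))"
    by (simp add: assms(1))
  also have "\<dots> = pmf (replicate_pmf n D) (f w)" by (rule pmf_map_inj'[OF \<open>inj f\<close>])
  also have "\<dots> = pmf (replicate_pmf n D) w"
  proof -
    have "length (f w) = length w" "prod_list (map (pmf D) (f w)) = prod_list (map (pmf D) w)"
      by (metis assms(2) size_mset, metis assms(2) mset_map prod_mset_prod_list)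
    then show ?thesis by (simp add: pmf_replicate_pmf)
  qed
  finally show "pmf (map_pmf f (replicate_pmf n D)) w = pmf (replicate_pmf n D) w" .
qed

lemma map_pmf_bool_eq_bernoulli:
  "map_pmf g D = bernoulli_pmf (measure_pmf.prob D {x. g x})"
proof (rule pmf_eqI)
  fix b :: bool
  have "measure_pmf.prob D {x. \<not> g x} = 1 - measure_pmf.prob D {x. g x}"
    using measure_pmf.prob_compl[of "{x. g x}" D] by (simp add: Compl_eq_Diff_UNIV[symmetric] Collect_neg_eq)
  then show "pmf (map_pmf g D) b = pmf (bernoulli_pmf (measure_pmf.prob D {x. g x})) b"
    by (cases b) (auto simp: pmf_map vimage_def)
qed

lemma replicate_pmf_count_binomial:
  "map_pmf (\<lambda>v. length (filter g v)) (replicate_pmf n D) = binomial_pmf n (measure_pmf.prob D {x. g x})"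
proof -
  have "binomial_pmf n (measure_pmf.prob D {x. g x}) =
        map_pmf (length \<circ> filter id) (replicate_pmf n (map_pmf g D))"
    by (subst binomial_pmf_altdef) (auto simp: map_pmf_bool_eq_bernoulli)
  then show ?thesis
    by (simp add: replicate_pmf_map_pmf pmf.map_comp o_def filter_map)
qed

text \<open>Hoeffding's inequality with deviation \<open>M/8\<close> bounds the lower tail by \<open>e\<^sup>-\<^sup>M\<^sup>/\<^sup>3\<^sup>2 \<le> e\<^sup>-\<^sup>5\<close>.\<close>

lemma binomial_tail_ge_half:
  assumes p: "1/4 < p" "p \<le> 1" and M: "160 \<le> M" and k: "8 * k \<le> M"
  shows "1/2 \<le> measure_pmf.prob (binomial_pmf M p) {x. k \<le> x}"
proof -
  let ?B = "binomial_pmf M p"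
  have "binomial_distribution p" using p by (simp add: binomial_distribution_def)
  then have "measure_pmf.prob ?B {x. real x \<le> real M * p - real M / 8} \<le> exp (- 2 * (real M / 8)\<^sup>2 / real M)"
    by (rule binomial_distribution.prob_le) (use M in auto)
  also have "\<dots> = exp (- (real M / 32))" using M by (simp add: power2_eq_square field_simps)
  also have "\<dots> \<le> exp (-5)" using M by simp
  also have "\<dots> \<le> 1/2"
    using exp_ge_add_one_self[of 5] by (simp add: exp_minus field_simps)
  finally have "measure_pmf.prob ?B {x. real x \<le> real M * p - real M / 8} \<le> 1/2" .
  moreover have "{x. \<not> k \<le> x} \<subseteq> {x. real x \<le> real M * p - real M / 8}"
  proof
    fix x assume "x \<in> {x. \<not> k \<le> x}"
    then have "8 * real x \<le> real M" using k by simp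
    moreover have "real M * (1/4) \<le> real M * p" using p by (intro mult_left_mono) auto
    ultimately show "x \<in> {x. real x \<le> real M * p - real M / 8}" by simp
  qed
  then have "measure_pmf.prob ?B {x. \<not> k \<le> x} \<le> measure_pmf.prob ?B {x. real x \<le> real M * p - real M / 8}"
    by (rule measure_pmf.finite_measure_mono) auto
  moreover have "measure_pmf.prob ?B {x. \<not> k \<le> x} = 1 - measure_pmf.prob ?B {x. k \<le> x}"
    using measure_pmf.prob_compl[of "{x. k \<le> x}" ?B] by (simp add: Compl_eq_Diff_UNIV[symmetric] Collect_neg_eq)
  ultimately show ?thesis by linarith
qed

section \<open>The \<open>\<epsilon>\<close>-net theorem\<close>

definition swap_index :: "nat \<Rightarrow> nat set \<Rightarrow> nat \<Rightarrow> nat" where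
  "swap_index M J i =
     (if i < M \<and> i \<in> J then i + M else if M \<le> i \<and> i < 2*M \<and> i - M \<in> J then i - M else i)"

definition swap_halves :: "nat \<Rightarrow> nat set \<Rightarrow> 'a list \<Rightarrow> 'a list" where
  "swap_halves M J w = (if length w = 2*M then permute_list (swap_index M J) w else w)"

lemma swap_index_swap_index[simp]: "swap_index M J (swap_index M J i) = i"
  by (auto simp: swap_index_def)

lemma swap_index_permutes: "swap_index M J permutes {..<2*M}"
proof (rule bij_imp_permutes)
  show "bij_betw (swap_index M J) {..<2 * M} {..<2 * M}"
    by (rule bij_betw_byWitness[where f'="swap_index M J"]) (auto simp: swap_index_def)
qed (auto simp: swap_index_def)

lemma length_swap_halves[simp]: "length (swap_halves M J w) = length w"
  by (simp add: swap_halves_def)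

lemma mset_swap_halves[simp]: "mset (swap_halves M J w) = mset w"
  by (simp add: swap_halves_def swap_index_permutes)

lemma nth_swap_halves:
  assumes "length w = 2*M" "i < 2*M"
  shows "swap_halves M J w ! i = w ! swap_index M J i"
  using assms by (simp add: swap_halves_def permute_list_nth swap_index_permutes)

lemma swap_halves_swap_halves[simp]: "swap_halves M J (swap_halves M J w) = w"
proof (cases "length w = 2*M")
  case True
  have "swap_index M J i < 2*M" if "i < 2*M" for i
    using that by (auto simp: swap_index_def)
  then show ?thesis using True by (intro nth_equalityI) (simp_all add: nth_swap_halves)
qed (simp add: swap_halves_def)

lemma nth_swap_halves_first:
  "length w = 2*M \<Longrightarrow> j < M \<Longrightarrow> swap_halves M J w ! j = (if j \<in> J then w ! (M+j) else w ! j)"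
  by (simp add: nth_swap_halves swap_index_def add.commute)

lemma nth_swap_halves_second:
  "length w = 2*M \<Longrightarrow> j < M \<Longrightarrow> swap_halves M J w ! (M+j) = (if j \<in> J then w ! j else w ! (M+j))"
  by (simp add: nth_swap_halves swap_index_def)

lemma map_pmf_swap_halves_replicate_pmf:
  "map_pmf (swap_halves M J) (replicate_pmf n D) = replicate_pmf n D"
  by (rule map_pmf_replicate_pmf_involution) simp_all

definition net_failure :: "'a pmf \<Rightarrow> ('a \<Rightarrow> bool) set \<Rightarrow> 'a list set" where
  "net_failure D G = {u. \<exists>g\<in>G. (\<forall>x\<in>set u. \<not> g x) \<and> 1/4 < measure_pmf.prob D {x. g x}}"

definition ghost_failure :: "nat \<Rightarrow> nat \<Rightarrow> ('a \<Rightarrow> bool) set \<Rightarrow> 'a list set" where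
  "ghost_failure M k G =
     {w. length w = 2*M \<and> (\<exists>g\<in>G. (\<forall>j<M. \<not> g (w!j)) \<and> k \<le> card {j. j<M \<and> g (w!(M+j))})}"

lemma prob_ghost_failure_append_ge_half:
  assumes M: "160 \<le> M" "8*k \<le> M" and u: "u \<in> net_failure D G" "length u = M"
  shows "1/2 \<le> measure_pmf.prob (replicate_pmf M D) {v. u @ v \<in> ghost_failure M k G}"
proof -
  let ?P = "replicate_pmf M D"
  obtain g where g: "g \<in> G" "\<forall>x\<in>set u. \<not> g x" "1/4 < measure_pmf.prob D {x. g x}"
    using u(1) by (auto simp: net_failure_def)
  have "u @ v \<in> ghost_failure M k G" if "v \<in> set_pmf ?P" "k \<le> length (filter g v)" for v
  proof -
    have "length v = M" using that(1) by (simp add: set_replicate_pmf)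
    then have "{j. j<M \<and> g ((u @ v) ! (M+j))} = {j. j < length v \<and> g (v ! j)}"
      using u(2) by (auto simp: nth_append)
    then have "k \<le> card {j. j<M \<and> g ((u @ v) ! (M+j))}"
      using that(2) by (simp add: length_filter_conv_card)
    moreover have "\<forall>j<M. \<not> g ((u @ v) ! j)" using g(2) u(2) by (simp add: nth_append)
    ultimately show ?thesis
      using g(1) u(2) \<open>length v = M\<close> unfolding ghost_failure_def by auto
  qed
  then have "{v. k \<le> length (filter g v)} \<inter> set_pmf ?P \<subseteq> {v. u @ v \<in> ghost_failure M k G}"
    by blast
  have "1/2 \<le> measure_pmf.prob (binomial_pmf M (measure_pmf.prob D {x. g x})) {x. k \<le> x}"
    by (rule binomial_tail_ge_half) (use g M in auto)
  also have "\<dots> = measure_pmf.prob ?P {v. k \<le> length (filter g v)}"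
    by (simp flip: replicate_pmf_count_binomial add: vimage_def)
  also have "\<dots> = measure_pmf.prob ?P ({v. k \<le> length (filter g v)} \<inter> set_pmf ?P)"
    by (simp add: measure_Int_set_pmf)
  also have "\<dots> \<le> measure_pmf.prob ?P {v. u @ v \<in> ghost_failure M k G}"
    by (rule measure_pmf.finite_measure_mono) (fact, simp)
  finally show ?thesis .
qed

lemma prob_net_failure_le_ghost_failure:
  assumes "160 \<le> M" "8*k \<le> M"
  shows "measure_pmf.prob (replicate_pmf M D) (net_failure D G)
         \<le> 2 * measure_pmf.prob (replicate_pmf (2*M) D) (ghost_failure M k G)"
proof -
  let ?P = "replicate_pmf M D"
  let ?Q = "\<lambda>u. measure_pmf.prob ?P {v. u @ v \<in> ghost_failure M k G}"
  have "replicate_pmf (2*M) D = bind_pmf ?P (\<lambda>u. map_pmf ((@) u) ?P)"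
    using replicate_pmf_distrib[of M M D] by (simp add: map_pmf_def mult_2)
  then have ghost: "measure_pmf.prob (replicate_pmf (2*M) D) (ghost_failure M k G) = (\<integral>u. ?Q u \<partial>?P)"
    by (simp add: prob_bind_pmf vimage_def)
  have "(1/2) * measure_pmf.prob ?P (net_failure D G) = (\<integral>u. (1/2::real) * indicator (net_failure D G) u \<partial>?P)"
    by simp
  also have "\<dots> \<le> (\<integral>u. ?Q u \<partial>?P)"
  proof (rule integral_mono_AE)
    show "AE u in measure_pmf ?P. (1/2::real) * indicator (net_failure D G) u \<le> ?Q u"
      using prob_ghost_failure_append_ge_half[OF assms]
      by (auto simp: AE_measure_pmf_iff set_replicate_pmf indicator_def)
  qed (auto simp: indicator_def intro!: integrable_measure_pmf_bounded[where B=1])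
  finally show ?thesis using ghost by simp
qed

lemma card_subsets_Int_eq:
  assumes "finite U" "Q \<subseteq> U" "J0 \<subseteq> Q"
  shows "card {J. J \<subseteq> U \<and> J \<inter> Q = J0} = 2 ^ (card U - card Q)"
proof -
  have "bij_betw (\<lambda>J. J - Q) {J. J \<subseteq> U \<and> J \<inter> Q = J0} (Pow (U - Q))"
    by (rule bij_betw_byWitness[where f'="\<lambda>J'. J' \<union> J0"]) (use assms in auto)
  then have "card {J. J \<subseteq> U \<and> J \<inter> Q = J0} = card (Pow (U - Q))" by (rule bij_betw_same_card)
  also have "\<dots> = 2 ^ (card U - card Q)"
    using assms by (simp add: card_Pow card_Diff_subset finite_subset)
  finally show ?thesis .
qed

text \<open>A swap that moves at least \<open>k\<close> points of \<open>t\<close> into the second half and none into the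
  first is determined on the at least \<open>k\<close> pairs that \<open>t\<close> splits, and free elsewhere.\<close>

lemma card_swaps_separating_le:
  assumes w: "length w = 2*M"
  shows "card {J. J \<subseteq> {..<M} \<and> (\<forall>j<M. swap_halves M J w ! j \<notin> t)
                 \<and> k \<le> card {j. j<M \<and> swap_halves M J w ! (M+j) \<in> t}} \<le> 2 ^ (M - k)"
    (is "card ?B \<le> _")
proof (cases "?B = {}")
  case False
  define Q where "Q = {j. j<M \<and> (w!j \<in> t) \<noteq> (w!(M+j) \<in> t)}"
  define J0 where "J0 = {j\<in>Q. w!j \<in> t}"
  note swap = nth_swap_halves_first[OF w] nth_swap_halves_second[OF w]
  have hits_split: "{j. j<M \<and> swap_halves M J w ! (M+j) \<in> t} \<subseteq> Q" and forced: "J \<inter> Q = J0" if "J \<in> ?B" for J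
  proof -
    from that have first: "swap_halves M J w ! j \<notin> t" if "j < M" for j
      using that by blast
    show "{j. j<M \<and> swap_halves M J w ! (M+j) \<in> t} \<subseteq> Q"
    proof
      fix j assume "j \<in> {j. j<M \<and> swap_halves M J w ! (M+j) \<in> t}"
      then show "j \<in> Q"
        using first[of j] swap(1)[of j J] swap(2)[of j J] by (cases "j \<in> J") (auto simp: Q_def)
    qed
    show "J \<inter> Q = J0"
    proof (intro equalityI subsetI)
      fix j assume "j \<in> J \<inter> Q"
      then show "j \<in> J0" using first[of j] swap(1)[of j J] by (auto simp: Q_def J0_def)
    next
      fix j assume "j \<in> J0"
      then show "j \<in> J \<inter> Q" using first[of j] swap(1)[of j J] by (cases "j \<in> J") (auto simp: Q_def J0_def)
    qed
  qed
  obtain J1 where J1: "J1 \<in> ?B" using False by blast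
  then have "k \<le> card {j. j<M \<and> swap_halves M J1 w ! (M+j) \<in> t}" by blast
  also have "\<dots> \<le> card Q" by (rule card_mono) (simp add: Q_def, rule hits_split[OF J1])
  finally have "k \<le> card Q" .
  have "card ?B \<le> card {J. J \<subseteq> {..<M} \<and> J \<inter> Q = J0}"
    using forced by (intro card_mono) (auto intro: finite_subset[of _ "Pow {..<M}"])
  also have "\<dots> = 2 ^ (M - card Q)"
    by (subst card_subsets_Int_eq) (auto simp: Q_def J0_def)
  also have "\<dots> \<le> 2 ^ (M - k)" using \<open>k \<le> card Q\<close> by (intro power_increasing) auto
  finally show ?thesis .
next
  case True
  then show ?thesis by (simp only: card.empty)
qed

lemma card_swaps_ghost_failure_le:
  "card {J. J \<subseteq> {..<M} \<and> swap_halves M J w \<in> ghost_failure M k G}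
   \<le> card (traces G (set w)) * 2 ^ (M - k)"
proof (cases "length w = 2*M")
  case w: True
  define B where "B t = {J. J \<subseteq> {..<M} \<and> (\<forall>j<M. swap_halves M J w ! j \<notin> t)
                          \<and> k \<le> card {j. j<M \<and> swap_halves M J w ! (M+j) \<in> t}}" for t
  have "{J. J \<subseteq> {..<M} \<and> swap_halves M J w \<in> ghost_failure M k G} \<subseteq> (\<Union>t\<in>traces G (set w). B t)"
  proof
    fix J assume "J \<in> {J. J \<subseteq> {..<M} \<and> swap_halves M J w \<in> ghost_failure M k G}"
    then obtain g where J: "J \<subseteq> {..<M}" "g \<in> G" "\<forall>j<M. \<not> g (swap_halves M J w ! j)"
      "k \<le> card {j. j<M \<and> g (swap_halves M J w ! (M+j))}" by (auto simp: ghost_failure_def)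
    have "swap_halves M J w ! i \<in> set w" if "i < 2*M" for i
      using that w by (metis length_swap_halves nth_mem mset_swap_halves set_mset_mset)
    then have "{j. j<M \<and> g (swap_halves M J w ! (M+j))}
               = {j. j<M \<and> swap_halves M J w ! (M+j) \<in> {x\<in>set w. g x}}"
      by auto
    then have "J \<in> B {x\<in>set w. g x}"
      using J unfolding B_def by auto
    moreover have "{x\<in>set w. g x} \<in> traces G (set w)" using J(2) by (auto simp: traces_def)
    ultimately show "J \<in> (\<Union>t\<in>traces G (set w). B t)" by blast
  qed
  then have "card {J. J \<subseteq> {..<M} \<and> swap_halves M J w \<in> ghost_failure M k G}
             \<le> card (\<Union>t\<in>traces G (set w). B t)"
    by (intro card_mono finite_UN_I finite_traces) (auto simp: B_def intro: finite_subset[of _ "Pow {..<M}"])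
  also have "\<dots> \<le> (\<Sum>t\<in>traces G (set w). card (B t))" by (rule card_UN_le[OF finite_traces]) simp
  also have "\<dots> \<le> (\<Sum>t\<in>traces G (set w). 2 ^ (M - k))"
    unfolding B_def by (intro sum_mono card_swaps_separating_le[OF w])
  finally show ?thesis by simp
qed (simp add: ghost_failure_def)

text \<open>Swapping halves preserves the product measure, so the probability of an event is the
  average over all \<open>2\<^sup>M\<close> swaps of the probability of its swapped preimage.\<close>

lemma prob_le_by_card_swaps:
  assumes "\<And>w. real (card {J. J \<subseteq> {..<M} \<and> swap_halves M J w \<in> A}) \<le> c"
  shows "2 ^ M * measure_pmf.prob (replicate_pmf n D) A \<le> c"
proof -
  let ?P = "replicate_pmf n D"
  let ?N = "\<lambda>w. real (card {J. J \<subseteq> {..<M} \<and> swap_halves M J w \<in> A})"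
  have swapped: "measure_pmf.prob ?P A = measure_pmf.prob ?P {w. swap_halves M J w \<in> A}" for J
    by (subst (1) map_pmf_swap_halves_replicate_pmf[where M=M and J=J, symmetric]) (simp add: vimage_def)
  have count: "(\<Sum>J\<in>Pow {..<M}. indicator {w. swap_halves M J w \<in> A} w) = ?N w" for w
    by (simp add: indicator_def sum.If_cases Int_def conj_commute Pow_def)
  have "real (card (Pow {..<M})) * measure_pmf.prob ?P A
        = (\<Sum>J\<in>Pow {..<M}. \<integral>w. indicator {w. swap_halves M J w \<in> A} w \<partial>?P)"
    using swapped by simp
  also have "\<dots> = (\<integral>w. ?N w \<partial>?P)"
    by (subst Bochner_Integration.integral_sum[symmetric])
       (auto simp: count intro: integrable_measure_pmf_bounded[where B=1])
  also have "\<dots> \<le> c"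
  proof (rule measure_pmf.integral_le_const)
    have "?N w \<le> real (card (Pow {..<M}))" for w
      by (intro of_nat_mono card_mono) auto
    then show "integrable (measure_pmf ?P) ?N"
      by (intro integrable_measure_pmf_bounded[where B="real (card (Pow {..<M}))"]) auto
  qed (use assms in simp)
  finally show ?thesis by (simp add: card_Pow)
qed

lemma prob_ghost_failure_le:
  assumes "\<And>B. finite B \<Longrightarrow> shatters G B \<Longrightarrow> card B \<le> d"
  shows "2 ^ M * measure_pmf.prob (replicate_pmf n D) (ghost_failure M k G)
         \<le> real (\<Sum>i\<le>d. (2*M) choose i) * 2 ^ (M - k)"
proof (rule prob_le_by_card_swaps)
  fix w :: "'a list"
  show "real (card {J. J \<subseteq> {..<M} \<and> swap_halves M J w \<in> ghost_failure M k G})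
        \<le> real (\<Sum>i\<le>d. (2*M) choose i) * 2 ^ (M - k)"
  proof (cases "length w = 2*M")
    case True
    have "card (traces G (set w)) \<le> (\<Sum>i\<le>d. card (set w) choose i)"
      by (rule Sauer_Shelah) (auto intro: assms finite_subset)
    also have "\<dots> \<le> (\<Sum>i\<le>d. (2*M) choose i)"
      using card_length[of w] True by (intro sum_mono binomial_right_mono) simp
    finally have "card (traces G (set w)) * 2 ^ (M - k) \<le> (\<Sum>i\<le>d. (2*M) choose i) * 2 ^ (M - k)"
      by (rule mult_le_mono1)
    with card_swaps_ghost_failure_le
    have "card {J. J \<subseteq> {..<M} \<and> swap_halves M J w \<in> ghost_failure M k G}
          \<le> (\<Sum>i\<le>d. (2*M) choose i) * 2 ^ (M - k)"
      by (rule le_trans)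
    then have "real (card {J. J \<subseteq> {..<M} \<and> swap_halves M J w \<in> ghost_failure M k G})
               \<le> real ((\<Sum>i\<le>d. (2*M) choose i) * 2 ^ (M - k))"
      by (simp only: of_nat_le_iff)
    then show ?thesis by simp
  qed (simp add: ghost_failure_def sum_nonneg)
qed

lemma net_failure_eq_empty:
  assumes "\<And>x. \<not> shatters G {x}" "(\<lambda>_. False) \<in> G"
  shows "net_failure D G = {}"
proof -
  have never: "{x. g x} = {}" if "g \<in> G" for g
  proof (rule ccontr)
    assume "{x. g x} \<noteq> {}"
    then obtain x where "g x" by blast
    then have "shatters G {x}"
      using that assms(2) by (auto simp: shatters_def subset_singleton_iff)
    then show False using assms(1) by blast
  qed
  have "measure_pmf.prob D {x. g x} = 0" if "g \<in> G" for g
    by (subst never[OF that]) simp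
  then show ?thesis by (fastforce simp: net_failure_def)
qed

lemma exp_320_pow_le:
  assumes "1 \<le> d"
  shows "2 * (exp 1 * 320) ^ d / 2 ^ (20 * d) \<le> exp (-1::real)"
proof -
  have e: "exp (1::real) \<le> 3" by (rule exp_le)
  then have q: "exp 1 * 320 / 2^20 \<le> (1::real)" by simp
  have "2 * (exp 1 * 320) ^ d / 2 ^ (20 * d) = 2 * (exp 1 * 320 / 2^20 :: real) ^ d"
    by (simp only: power_mult power_divide times_divide_eq_right)
  also have "\<dots> \<le> 2 * (exp 1 * 320 / 2^20) ^ 1"
    using q assms by (intro mult_left_mono power_decreasing) auto
  also have "\<dots> \<le> exp (-1)"
  proof -
    have "exp 1 * exp 1 \<le> (3::real) * 3" using e by (intro mult_mono) auto
    then show ?thesis by (simp add: exp_minus field_simps)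
  qed
  finally show ?thesis .
qed

text \<open>Symmetrization with a ghost sample of size \<open>M = 160 d\<close> in which \<open>k = 20 d\<close> hits are required.\<close>

theorem prob_net_failure_le:
  assumes "\<And>B. finite B \<Longrightarrow> shatters G B \<Longrightarrow> card B \<le> d" "(\<lambda>_. False) \<in> G"
  shows "measure_pmf.prob (replicate_pmf (160*d) D) (net_failure D G) \<le> exp (-1)"
proof (cases "d = 0")
  case True
  have "\<not> shatters G {x}" for x
  proof
    assume "shatters G {x}"
    then have "card {x} \<le> d" using assms(1) by blast
    with True show False by simp
  qed
  then show ?thesis using net_failure_eq_empty[OF _ assms(2)] by simp
next
  case False
  define M k where "M = 160 * d" and "k = 20 * d"
  define S where "S = (\<Sum>i\<le>d. (2*M) choose i)"
  have "measure_pmf.prob (replicate_pmf M D) (net_failure D G)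
        \<le> 2 * measure_pmf.prob (replicate_pmf (2*M) D) (ghost_failure M k G)"
    by (rule prob_net_failure_le_ghost_failure) (use False in \<open>simp_all add: M_def k_def\<close>)
  also have "\<dots> \<le> 2 * (real S / 2 ^ k)"
  proof -
    let ?p = "measure_pmf.prob (replicate_pmf (2*M) D) (ghost_failure M k G)"
    have "2 ^ M * ?p \<le> real S * 2 ^ (M - k)"
      unfolding S_def by (rule prob_ghost_failure_le) (rule assms(1))
    moreover have "(2::real) ^ M = 2 ^ (M - k) * 2 ^ k" by (simp add: M_def k_def flip: power_add)
    ultimately have "2 ^ (M - k) * (2 ^ k * ?p) \<le> 2 ^ (M - k) * real S"
      by (simp add: algebra_simps)
    then have "2 ^ k * ?p \<le> real S" by simp
    then show ?thesis by (simp add: field_simps)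
  qed
  also have "\<dots> \<le> 2 * (exp 1 * 320) ^ d / 2 ^ (20 * d)"
  proof -
    have "real S \<le> (exp 1 * real (2*M) / d) ^ d"
      unfolding S_def using False by (intro sum_binomial_le_exp_pow) (auto simp: M_def)
    also have "exp 1 * real (2*M) / d = exp 1 * 320" using False by (simp add: M_def)
    finally show ?thesis by (simp add: k_def divide_right_mono)
  qed
  also have "\<dots> \<le> exp (-1)" by (rule exp_320_pow_le) (use False in simp)
  finally show ?thesis by (simp add: M_def)
qed

section \<open>Chains of thought\<close>

lemma e2e_Suc: "e2e (Suc t) f x = f ((fbar f ^^ t) x)"
  by (simp add: e2e_def fbar_def)

lemma length_CoT[simp]: "length (CoT T f x) = T"
  by (simp add: CoT_def)

lemma CoT_Suc_funpow: "CoT (Suc t) f x = CoT t f x @ [f ((fbar f ^^ t) x)]"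
  by (simp add: CoT_def e2e_Suc)

lemma funpow_fbar: "(fbar f ^^ t) x = x @ CoT t f x"
proof (induction t)
  case 0
  then show ?case by (simp add: CoT_def)
next
  case (Suc t)
  have "(fbar f ^^ Suc t) x = fbar f (x @ CoT t f x)" by (simp only: funpow.simps comp_apply Suc.IH)
  also have "\<dots> = x @ CoT (Suc t) f x" by (simp only: CoT_Suc_funpow Suc.IH) (simp add: fbar_def)
  finally show ?case .
qed

lemma CoT_Suc: "CoT (Suc t) f x = CoT t f x @ [f (x @ CoT t f x)]"
  by (simp add: CoT_Suc_funpow funpow_fbar)

lemma e2e_eq_if_CoT_eq:
  assumes "CoT T g x = CoT T f x"
  shows "e2e T g x = e2e T f x"
proof (cases T)
  case 0
  then show ?thesis by (simp add: e2e_def)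
next
  case (Suc t)
  then have "e2e T g x = last (CoT T g x)" "e2e T f x = last (CoT T f x)"
    by (simp_all add: CoT_def)
  then show ?thesis using assms by simp
qed

lemma CoT_eq_iff:
  "length z = T \<Longrightarrow> CoT T g x = z \<longleftrightarrow> (\<forall>t<T. g (x @ take t z) = z ! t)"
proof (induction T arbitrary: z)
  case 0
  then show ?case by (simp add: CoT_def)
next
  case (Suc T)
  then obtain z0 b where z: "z = z0 @ [b]" and "length z0 = T"
    by (metis append_butlast_last_id length_0_conv length_butlast diff_Suc_1 nat.simps(3))
  then have "CoT (Suc T) g x = z \<longleftrightarrow> CoT T g x = z0 \<and> g (x @ z0) = b"
    by (auto simp: CoT_Suc)
  also have "\<dots> \<longleftrightarrow> (\<forall>t<T. g (x @ take t z0) = z0 ! t) \<and> g (x @ z0) = b"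
    using Suc.IH[OF \<open>length z0 = T\<close>] by simp
  also have "\<dots> \<longleftrightarrow> (\<forall>t<Suc T. g (x @ take t z) = z ! t)"
    using \<open>length z0 = T\<close> by (auto simp: z nth_append less_Suc_eq)
  finally show ?case .
qed

section \<open>The Boosting Algorithm\<close>

lemma set_pmf_boost_update:
  assumes "set_pmf D \<subseteq> {..<m}"
  shows "set_pmf (boost_update T m xs ys D g e) \<subseteq> {..<m}"
proof -
  define \<alpha> where "\<alpha> = ln ((1 - e) / e) / 2"
  define w where "w = (\<lambda>i. pmf D i * exp (if e2e T g (xs i) \<noteq> ys i then \<alpha> else - \<alpha>))"
  define Z where "Z = (\<Sum>j<m. w j)"
  have w_nonneg: "0 \<le> w i" for i by (simp add: w_def)
  have w_outside: "w i = 0" if "i \<notin> {..<m}" for i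
    using assms that by (auto simp: w_def set_pmf_iff)
  obtain j where "j \<in> set_pmf D" using set_pmf_not_empty[of D] by auto
  then have "0 < w j" "j < m" using assms by (auto simp: w_def set_pmf_iff order.strict_iff_order)
  then have "0 < Z" unfolding Z_def by (intro sum_pos2[where i=j]) (auto simp: w_nonneg)
  then have nonneg: "\<And>i. 0 \<le> w i / Z" using w_nonneg by simp
  have "(\<integral>\<^sup>+i. ennreal (w i / Z) \<partial>count_space UNIV) = (\<Sum>i<m. ennreal (w i / Z))"
    by (rule nn_integral_count_space') (auto simp: w_outside)
  also have "\<dots> = ennreal (\<Sum>i<m. w i / Z)" using nonneg by simp
  also have "\<dots> = 1" using \<open>0 < Z\<close> by (simp add: Z_def flip: sum_divide_distrib)
  finally have "set_pmf (embed_pmf (\<lambda>i. w i / Z)) = {i. w i / Z \<noteq> 0}"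
    by (rule set_embed_pmf[OF nonneg])
  moreover have "boost_update T m xs ys D g e = embed_pmf (\<lambda>i. w i / Z)"
    unfolding boost_update_def Let_def w_def Z_def \<alpha>_def by (rule refl)
  ultimately show ?thesis using w_outside by auto
qed

lemma prob_boost_inner_fail_le:
  assumes try_fail: "\<And>D hist. set_pmf D \<subseteq> {..<m} \<Longrightarrow>
      measure_pmf.prob (boost_try T M xs ys adv sel D hist) {r. 1/4 < snd (snd r)} \<le> q"
    and "set_pmf D \<subseteq> {..<m}"
  shows "measure_pmf.prob (boost_inner T M xs ys adv sel (Suc n) D hist) {r. 1/4 < snd (snd r)} \<le> q ^ Suc n"
proof (induction n arbitrary: hist)
  case 0
  have "boost_inner T M xs ys adv sel (Suc 0) D hist = boost_try T M xs ys adv sel D hist"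
    by (simp add: case_prod_beta' bind_return_pmf')
  then show ?case using try_fail[OF assms(2)] by simp
next
  case (Suc n)
  let ?fail = "{r :: history \<times> thinker \<times> real. 1/4 < snd (snd r)}"
  let ?try = "boost_try T M xs ys adv sel D hist"
  let ?cont = "\<lambda>(h', g, e). if e \<le> 1/4 \<or> Suc n = 0 then return_pmf (h', g, e)
                           else boost_inner T M xs ys adv sel (Suc n) D h'"
  have "0 \<le> q" using try_fail[OF assms(2), of hist] measure_nonneg order_trans by blast
  have cont: "measure_pmf.prob (?cont r) ?fail \<le> indicator ?fail r * q ^ Suc n" for r
    using Suc.IH by (cases r) auto
  have "measure_pmf.prob (boost_inner T M xs ys adv sel (Suc (Suc n)) D hist) ?fail
        = (\<integral>r. measure_pmf.prob (?cont r) ?fail \<partial>?try)"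
    by (simp add: prob_bind_pmf)
  also have "\<dots> \<le> (\<integral>r. indicator ?fail r * q ^ Suc n \<partial>?try)"
    by (rule integral_mono[OF integrable_measure_pmf_bounded[where B=1]
                              integrable_measure_pmf_bounded[where B="\<bar>q ^ Suc n\<bar>"] cont])
       (auto simp: indicator_def)
  also have "\<dots> = measure_pmf.prob ?try ?fail * q ^ Suc n" by simp
  also have "\<dots> \<le> q * q ^ Suc n"
    using \<open>0 \<le> q\<close> by (intro mult_right_mono try_fail[OF assms(2)]) simp
  finally show ?case by simp
qed

lemma prob_boost_outer_fail_le:
  assumes inner: "\<And>D hist. set_pmf D \<subseteq> {..<m} \<Longrightarrow>
      measure_pmf.prob (boost_inner T M xs ys adv sel L D hist) {r. 1/4 < snd (snd r)} \<le> p"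
    and "set_pmf D \<subseteq> {..<m}"
  shows "measure_pmf.prob (boost_outer T m M xs ys adv sel L n D hist) {es. \<exists>e\<in>set es. 1/4 < e}
         \<le> real n * p"
  using assms(2)
proof (induction n arbitrary: D hist)
  case (Suc n)
  let ?fail = "{es :: real list. \<exists>e\<in>set es. 1/4 < e}"
  let ?inner_fail = "{r :: history \<times> thinker \<times> real. 1/4 < snd (snd r)}"
  let ?inner = "boost_inner T M xs ys adv sel L D hist"
  let ?cont = "\<lambda>(h', g, e). if e = 0 then return_pmf [e]
                 else map_pmf (Cons e) (boost_outer T m M xs ys adv sel L n (boost_update T m xs ys D g e) h')"
  have "0 \<le> p" using inner[OF Suc.prems, of hist] measure_nonneg order_trans by blast
  have cont: "measure_pmf.prob (?cont r) ?fail \<le> indicator ?inner_fail r + real n * p" for r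
  proof -
    obtain h' g e where r: "r = (h', g, e)" by (cases r)
    let ?outer = "boost_outer T m M xs ys adv sel L n (boost_update T m xs ys D g e) h'"
    have "measure_pmf.prob ?outer ?fail \<le> real n * p"
      by (intro Suc.IH set_pmf_boost_update Suc.prems)
    moreover have "measure_pmf.prob (map_pmf (Cons e) ?outer) ?fail
                   = measure_pmf.prob ?outer (if 1/4 < e then UNIV else ?fail)"
      by (simp add: vimage_def)
    ultimately show ?thesis using \<open>0 \<le> p\<close> by (simp add: r indicator_def)
  qed
  have "measure_pmf.prob (boost_outer T m M xs ys adv sel L (Suc n) D hist) ?fail
        = (\<integral>r. measure_pmf.prob (?cont r) ?fail \<partial>?inner)"
    by (simp add: prob_bind_pmf)
  also have "\<dots> \<le> (\<integral>r. indicator ?inner_fail r + real n * p \<partial>?inner)"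
    by (rule integral_mono[OF integrable_measure_pmf_bounded[where B=1]
                              integrable_measure_pmf_bounded[where B="1 + real n * p"] cont])
       (auto simp: indicator_def \<open>0 \<le> p\<close>)
  also have "\<dots> = measure_pmf.prob ?inner ?inner_fail + real n * p"
    by (subst Bochner_Integration.integral_add)
       (auto intro: integrable_measure_pmf_bounded[where B=1] simp: indicator_def)
  also have "\<dots> \<le> p + real n * p" using inner[OF Suc.prems] by simp
  finally show ?case by (simp add: algebra_simps)
qed simp

lemma prob_boost_success:
  assumes try_fail: "\<And>D hist. set_pmf D \<subseteq> {..<m} \<Longrightarrow>
      measure_pmf.prob (boost_try T M xs ys adv sel D hist) {r. 1/4 < snd (snd r)} \<le> exp (-1)"
    and "0 < m" "0 < \<delta>" "\<delta> < 1"
  shows "1 - \<delta> / 2 \<le> measure_pmf.prob (boost T m xs ys K \<delta> M adv sel) {es. \<forall>e\<in>set es. e \<le> 1/4}"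
proof -
  let ?fail = "{es :: real list. \<exists>e\<in>set es. 1/4 < e}"
  let ?boost = "boost T m xs ys K \<delta> M adv sel"
  have "{es. \<forall>e\<in>set es. e \<le> 1/4} = UNIV - ?fail" by (auto simp: not_less)
  then have success: "measure_pmf.prob ?boost {es. \<forall>e\<in>set es. e \<le> 1/4} = 1 - measure_pmf.prob ?boost ?fail"
    using measure_pmf.prob_compl[of ?fail ?boost] by simp
  show ?thesis
  proof (cases "K = 0")
    case True
    then show ?thesis using \<open>0 < \<delta>\<close> by (simp add: boost_def)
  next
    case False
    define L where "L = nat \<lceil>ln (2 * real K / \<delta>)\<rceil>"
    have "1 < 2 * real K / \<delta>" using False \<open>0 < \<delta>\<close> \<open>\<delta> < 1\<close> by (simp add: field_simps)
    then have "0 < ln (2 * real K / \<delta>)" by simp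
    then have "1 \<le> L" unfolding L_def by linarith
    then obtain L' where L': "L = Suc L'" by (cases L) auto
    have "set_pmf (pmf_of_set {..<m}) \<subseteq> {..<m}" using \<open>0 < m\<close> by (subst set_pmf_of_set) auto
    then have "measure_pmf.prob ?boost ?fail \<le> real K * exp (-1) ^ L"
      unfolding boost_def L_def[symmetric]
      by (rule prob_boost_outer_fail_le[rotated]) (unfold L', rule prob_boost_inner_fail_le[OF try_fail])
    also have "exp (-1) ^ L = exp (- real L)" by (simp flip: exp_of_nat_mult)
    also have "\<dots> \<le> exp (- ln (2 * real K / \<delta>))" unfolding L_def by simp linarith
    also have "\<dots> = \<delta> / (2 * real K)" using \<open>1 < 2 * real K / \<delta>\<close> \<open>0 < \<delta>\<close> by (simp add: exp_minus)
    finally have "measure_pmf.prob ?boost ?fail \<le> \<delta> / 2" using False by (simp add: mult_left_mono)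
    then show ?thesis using success by linarith
  qed
qed

lemma prob_boost_try_fail_le:
  assumes "\<And>B. finite B \<Longrightarrow> shatters G B \<Longrightarrow> card B \<le> d" "(\<lambda>_. False) \<in> G"
    and net: "\<And>S. S \<in> set_pmf (replicate_pmf (160*d) D) \<Longrightarrow>
      1/4 < e2e_err T xs ys D (sel hist (map (\<lambda>i. (xs i, CoT T (adv hist S) (xs i))) S)) \<Longrightarrow>
      S \<in> net_failure D G"
  shows "measure_pmf.prob (boost_try T (160*d) xs ys adv sel D hist) {r. 1/4 < snd (snd r)} \<le> exp (-1)"
proof -
  let ?P = "replicate_pmf (160*d) D"
  let ?fail = "{S. 1/4 < e2e_err T xs ys D (sel hist (map (\<lambda>i. (xs i, CoT T (adv hist S) (xs i))) S))}"
  have "measure_pmf.prob (boost_try T (160*d) xs ys adv sel D hist) {r. 1/4 < snd (snd r)}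
        = measure_pmf.prob ?P (?fail \<inter> set_pmf ?P)"
    by (simp add: boost_try_def iid_pmf_eq_replicate_pmf Let_def vimage_def measure_Int_set_pmf)
  also have "\<dots> \<le> measure_pmf.prob ?P (net_failure D G)"
    by (rule measure_pmf.finite_measure_mono) (use net in auto)
  also have "\<dots> \<le> exp (-1)" by (rule prob_net_failure_le[OF assms(1,2)])
  finally show ?thesis .
qed

lemma consistent_learner_sample:
  assumes "\<forall>hist obs. (\<exists>g\<in>F. consistent T g obs) \<longrightarrow> sel hist obs \<in> F \<and> consistent T (sel hist obs) obs"
    and "f \<in> F" "g = sel hist (map (\<lambda>i. (xs i, CoT T f (xs i))) S)"
  shows "g \<in> F" "\<forall>s\<in>set S. CoT T g (xs s) = CoT T f (xs s)"
proof -
  have "consistent T f (map (\<lambda>i. (xs i, CoT T f (xs i))) S)" by (auto simp: consistent_def)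
  then have "g \<in> F" "consistent T g (map (\<lambda>i. (xs i, CoT T f (xs i))) S)"
    using assms by blast+
  then show "g \<in> F" "\<forall>s\<in>set S. CoT T g (xs s) = CoT T f (xs s)"
    by (auto simp: consistent_def)
qed

lemma e2e_err_eq_prob_disagree:
  assumes "set_pmf D \<subseteq> {..<m}" "\<forall>i<m. ys i = h (xs i)"
  shows "e2e_err T xs ys D g = measure_pmf.prob D {i. e2e T g (xs i) \<noteq> h (xs i)}"
proof -
  have "{i. e2e T g (xs i) \<noteq> ys i} \<inter> set_pmf D = {i. e2e T g (xs i) \<noteq> h (xs i)} \<inter> set_pmf D"
    using assms by auto
  then show ?thesis unfolding e2e_err_def by (metis measure_Int_set_pmf)
qed

lemma shatters_pullback:
  assumes "shatters ((\<lambda>k i. k (\<phi> i) \<noteq> b (\<phi> i)) ` H) B"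
  shows "inj_on \<phi> B" "shatters H (\<phi> ` B)"
proof -
  show "inj_on \<phi> B"
  proof (rule inj_onI, rule ccontr)
    fix x y assume xy: "x \<in> B" "y \<in> B" "\<phi> x = \<phi> y" "x \<noteq> y"
    then have "{x} \<subseteq> B" by simp
    then obtain k where k: "\<forall>z\<in>B. (k (\<phi> z) \<noteq> b (\<phi> z)) = (z \<in> {x})"
      using assms unfolding shatters_def by blast
    have "(k (\<phi> x) \<noteq> b (\<phi> x)) = (x \<in> {x})" "(k (\<phi> y) \<noteq> b (\<phi> y)) = (y \<in> {x})"
      using k xy(1,2) by blast+
    then show False using xy(3,4) by simp
  qed
  show "shatters H (\<phi> ` B)" unfolding shatters_def
  proof (intro allI impI)
    fix B' assume "B' \<subseteq> \<phi> ` B"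
    have "{i\<in>B. (\<phi> i \<in> B') \<noteq> b (\<phi> i)} \<subseteq> B" by blast
    then obtain k where "k \<in> H" "\<forall>z\<in>B. (k (\<phi> z) \<noteq> b (\<phi> z)) = (z \<in> {i\<in>B. (\<phi> i \<in> B') \<noteq> b (\<phi> i)})"
      using assms unfolding shatters_def by blast
    then show "\<exists>h\<in>H. \<forall>x\<in>\<phi> ` B. h x = (x \<in> B')" by auto
  qed
qed

lemma card_le_VCdim_pullback:
  assumes "VCdim A H \<noteq> \<infinity>" "finite B" "\<phi> ` B \<subseteq> A" "shatters ((\<lambda>k i. k (\<phi> i) \<noteq> b (\<phi> i)) ` H) B"
  shows "card B \<le> the_enat (VCdim A H)"
  using card_le_VCdim[OF assms(1) _ assms(3)] shatters_pullback[OF assms(4)] assms(2)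
  by (simp add: card_image)

lemma nat_ceiling_160: "nat \<lceil>160 * real d\<rceil> = 160 * d"
  by (metis ceiling_of_nat nat_int of_nat_mult of_nat_numeral)

theorem boost_success_e2e:
  fixes F :: "thinker set"
  assumes "0 < m" "h \<in> e2e T ` F" and ys: "\<forall>i<m. ys i = h (xs i)" and "0 < \<delta>" "\<delta> < 1"
    and VC: "VCdim UNIV (e2e T ` F) \<noteq> \<infinity>"
    and adv: "\<forall>hist S. adv hist S \<in> F \<and> e2e T (adv hist S) = h"
    and sel: "\<forall>hist obs. (\<exists>g\<in>F. consistent T g obs) \<longrightarrow> sel hist obs \<in> F \<and> consistent T (sel hist obs) obs"
  shows "1 - \<delta> / 2 \<le> measure_pmf.prob
           (boost T m xs ys K \<delta> (nat \<lceil>160 * real (the_enat (VCdim UNIV (e2e T ` F)))\<rceil>) adv sel)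
           {es. \<forall>e\<in>set es. e \<le> 1/4}"
  unfolding nat_ceiling_160
proof (rule prob_boost_success[OF _ assms(1,4,5)])
  fix D :: "nat pmf" and hist
  assume D: "set_pmf D \<subseteq> {..<m}"
  define G where "G = (\<lambda>k i. k (xs i) \<noteq> h (xs i)) ` e2e T ` F"
  show "measure_pmf.prob (boost_try T (160 * the_enat (VCdim UNIV (e2e T ` F))) xs ys adv sel D hist)
          {r. 1/4 < snd (snd r)} \<le> exp (-1)"
  proof (rule prob_boost_try_fail_le)
    show "card B \<le> the_enat (VCdim UNIV (e2e T ` F))" if "finite B" "shatters G B" for B
      using card_le_VCdim_pullback[OF VC that(1), where \<phi>=xs and b=h] that(2) by (simp add: G_def)
    show "(\<lambda>_. False) \<in> G" using \<open>h \<in> e2e T ` F\<close> by (auto simp: G_def image_iff)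
  next
    fix S
    define g where "g = sel hist (map (\<lambda>i. (xs i, CoT T (adv hist S) (xs i))) S)"
    assume "1/4 < e2e_err T xs ys D g"
    then have "1/4 < measure_pmf.prob D {i. e2e T g (xs i) \<noteq> h (xs i)}"
      using e2e_err_eq_prob_disagree[OF D ys] by simp
    moreover have "g \<in> F" "\<forall>s\<in>set S. CoT T g (xs s) = CoT T (adv hist S) (xs s)"
      using consistent_learner_sample[OF sel _ g_def] adv by blast+
    moreover have "e2e T g (xs s) = h (xs s)" if "s \<in> set S" for s
      using e2e_eq_if_CoT_eq adv that calculation(3) by metis
    ultimately show "S \<in> net_failure D G"
      unfolding net_failure_def G_def by (intro CollectI bexI[of _ "\<lambda>i. e2e T g (xs i) \<noteq> h (xs i)"]) auto
  qed
qed

text \<open>When the thinker cannot depend on the sample, all chains of thought in a round are those of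
  one fixed thinker \<open>f\<^sub>0\<close>, so a bad hypothesis is caught by the CoT loss class evaluated at the
  fixed points \<open>(x\<^sub>i, CoT f\<^sub>0 x\<^sub>i)\<close>.\<close>

theorem boost_success_CoT:
  fixes F :: "thinker set"
  assumes "0 < m" and ys: "\<forall>i<m. ys i = h (xs i)" and "0 < \<delta>" "\<delta> < 1"
    and VC: "VCdim {(x, z). length z = T} (CoT_loss_class T F) \<noteq> \<infinity>"
    and adv: "\<forall>hist S. adv hist S \<in> F \<and> e2e T (adv hist S) = h"
    and oblivious: "\<forall>hist S S'. adv hist S = adv hist S'"
    and sel: "\<forall>hist obs. (\<exists>g\<in>F. consistent T g obs) \<longrightarrow> sel hist obs \<in> F \<and> consistent T (sel hist obs) obs"
  shows "1 - \<delta> / 2 \<le> measure_pmf.prob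
           (boost T m xs ys K \<delta>
              (nat \<lceil>160 * real (the_enat (VCdim {(x, z). length z = T} (CoT_loss_class T F)))\<rceil>) adv sel)
           {es. \<forall>e\<in>set es. e \<le> 1/4}"
  unfolding nat_ceiling_160
proof (rule prob_boost_success[OF _ assms(1,3,4)])
  fix D :: "nat pmf" and hist
  assume D: "set_pmf D \<subseteq> {..<m}"
  define f0 where "f0 = adv hist []"
  define \<phi> where "\<phi> i = (xs i, CoT T f0 (xs i))" for i
  define G where "G = (\<lambda>k i. k (\<phi> i) \<noteq> False) ` CoT_loss_class T F"
  have f0: "f0 \<in> F" "e2e T f0 = h" using adv by (simp_all add: f0_def)
  show "measure_pmf.prob
          (boost_try T (160 * the_enat (VCdim {(x, z). length z = T} (CoT_loss_class T F))) xs ys adv sel D hist)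
          {r. 1/4 < snd (snd r)} \<le> exp (-1)"
  proof (rule prob_boost_try_fail_le)
    show "card B \<le> the_enat (VCdim {(x, z). length z = T} (CoT_loss_class T F))" if "finite B" "shatters G B" for B
      using card_le_VCdim_pullback[OF VC that(1), where \<phi>=\<phi> and b="\<lambda>_. False"] that(2)
      by (simp add: G_def \<phi>_def image_subset_iff)
    show "(\<lambda>_. False) \<in> G"
      using f0(1) by (auto simp: G_def \<phi>_def CoT_loss_class_def image_iff intro!: exI[of _ f0])
  next
    fix S
    define g where "g = sel hist (map (\<lambda>i. (xs i, CoT T (adv hist S) (xs i))) S)"
    have "adv hist S = f0" unfolding f0_def using oblivious by blast
    assume "1/4 < e2e_err T xs ys D g"
    then have "1/4 < measure_pmf.prob D {i. e2e T g (xs i) \<noteq> h (xs i)}"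
      using e2e_err_eq_prob_disagree[OF D ys] by simp
    also have "\<dots> \<le> measure_pmf.prob D {i. CoT T g (xs i) \<noteq> CoT T f0 (xs i)}"
    proof (rule measure_pmf.finite_measure_mono)
      show "{i. e2e T g (xs i) \<noteq> h (xs i)} \<subseteq> {i. CoT T g (xs i) \<noteq> CoT T f0 (xs i)}"
        using e2e_eq_if_CoT_eq f0(2) by blast
    qed simp
    finally have "1/4 < measure_pmf.prob D {i. CoT T g (xs i) \<noteq> CoT T f0 (xs i)}" .
    moreover have "g = sel hist (map (\<lambda>i. (xs i, CoT T f0 (xs i))) S)"
      using g_def \<open>adv hist S = f0\<close> by simp
    note g = consistent_learner_sample[OF sel f0(1) this]
    moreover have "(\<lambda>i. CoT T g (xs i) \<noteq> CoT T f0 (xs i)) \<in> G"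
      unfolding G_def
    proof (rule image_eqI)
      show "(\<lambda>(x, z). z \<noteq> CoT T g x) \<in> CoT_loss_class T F"
        using g(1) by (auto simp: CoT_loss_class_def)
    qed (auto simp: \<phi>_def)
    ultimately show "S \<in> net_failure D G"
      using g(2) unfolding net_failure_def by (intro CollectI bexI) auto
  qed
qed

section \<open>VC dimension of the CoT loss class\<close>

definition CoT_prefixes :: "nat \<Rightarrow> (bool list \<times> bool list) set \<Rightarrow> bool list set" where
  "CoT_prefixes T C = (\<lambda>((x, z), t). x @ take t z) ` (C \<times> {..<T})"

lemma card_CoT_prefixes_le: "finite C \<Longrightarrow> card (CoT_prefixes T C) \<le> card C * T"
  unfolding CoT_prefixes_def by (metis card_cartesian_product card_image_le card_lessThan finite_SigmaI finite_lessThan)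

text \<open>By \<open>CoT_eq_iff\<close>, the loss of a thinker on the points of \<open>C\<close> depends only on its
  values on \<open>CoT_prefixes T C\<close>.\<close>

lemma card_traces_CoT_loss_class_le:
  assumes "finite C" "C \<subseteq> {(x, z). length z = T}"
  shows "card (traces (CoT_loss_class T F) C) \<le> card (traces F (CoT_prefixes T C))"
proof -
  define \<Phi> where "\<Phi> A = {(x, z)\<in>C. \<not> (\<forall>t<T. (x @ take t z \<in> A) = z ! t)}" for A
  have "traces (CoT_loss_class T F) C \<subseteq> \<Phi> ` traces F (CoT_prefixes T C)"
  proof
    fix A assume "A \<in> traces (CoT_loss_class T F) C"
    then obtain f where f: "f \<in> F" "A = {(x, z)\<in>C. z \<noteq> CoT T f x}"
      by (auto simp: traces_def CoT_loss_class_def case_prod_beta)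
    have "CoT T f x = z \<longleftrightarrow> (\<forall>t<T. (x @ take t z \<in> {q\<in>CoT_prefixes T C. f q}) = z ! t)"
      if "(x, z) \<in> C" for x z
    proof -
      have "x @ take t z \<in> CoT_prefixes T C" if "t < T" for t
        unfolding CoT_prefixes_def using \<open>(x, z) \<in> C\<close> that by force
      then show ?thesis using CoT_eq_iff[of z T f x] that assms(2) by auto
    qed
    then have "A = \<Phi> {q\<in>CoT_prefixes T C. f q}" by (auto simp: f(2) \<Phi>_def)
    moreover have "{q\<in>CoT_prefixes T C. f q} \<in> traces F (CoT_prefixes T C)"
      using f(1) by (auto simp: traces_def)
    ultimately show "A \<in> \<Phi> ` traces F (CoT_prefixes T C)" by blast
  qed
  moreover have "finite (CoT_prefixes T C)" using assms(1) by (simp add: CoT_prefixes_def)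
  ultimately show ?thesis
    by (meson card_image_le card_mono finite_imageI finite_traces le_trans)
qed

lemma two_pow_card_le_sum_binomial:
  fixes F :: "thinker set"
  assumes "finite C" "C \<subseteq> {(x, z). length z = T}" "shatters (CoT_loss_class T F) C"
    and VC: "VCdim UNIV F \<noteq> \<infinity>"
  shows "2 ^ card C \<le> (\<Sum>i\<le>the_enat (VCdim UNIV F). (card C * T) choose i)"
proof -
  let ?Q = "CoT_prefixes T C"
  have "finite ?Q" using assms(1) by (simp add: CoT_prefixes_def)
  have "2 ^ card C = card (traces (CoT_loss_class T F) C)"
    using assms(1,3) by (simp add: traces_eq_Pow_if_shatters card_Pow)
  also have "\<dots> \<le> card (traces F ?Q)" by (rule card_traces_CoT_loss_class_le[OF assms(1,2)])
  also have "\<dots> \<le> (\<Sum>i\<le>the_enat (VCdim UNIV F). card ?Q choose i)"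
    using card_le_VCdim[OF VC] \<open>finite ?Q\<close> by (intro Sauer_Shelah) (auto intro: finite_subset)
  also have "\<dots> \<le> (\<Sum>i\<le>the_enat (VCdim UNIV F). (card C * T) choose i)"
    using card_CoT_prefixes_le[OF assms(1)] by (intro sum_mono binomial_right_mono)
  finally show ?thesis .
qed

lemma le_of_two_pow_le_exp_pow:
  fixes n d T :: nat
  assumes T: "2 \<le> T" and n: "1 \<le> n" and d: "1 \<le> d"
    and pow: "(2::real) ^ n \<le> (exp 1 * real (n * T) / real d) ^ d"
  shows "real n \<le> 12 * real d * ln (real T)"
proof -
  have "real n * ln 2 = ln ((2::real) ^ n)" by (simp add: ln_realpow)
  also have "\<dots> \<le> ln ((exp 1 * real (n * T) / real d) ^ d)" using pow n d T by simp
  also have "\<dots> = real d * (1 + ln (real n) + ln (real T) - ln (real d))"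
    using n d T by (simp add: ln_realpow ln_mult ln_div)
  finally have a: "real n * ln 2 \<le> real d * (1 + ln (real n) + ln (real T) - ln (real d))" .
  have "ln (real n / (4 * real d)) \<le> real n / (4 * real d) - 1"
    using n d by (intro ln_le_minus_one) simp
  moreover have "ln (real n / (4 * real d)) = ln (real n) - 2 * ln 2 - ln (real d)"
    using n d ln_realpow[of 2 2] by (simp add: ln_mult ln_div)
  ultimately have b: "ln (real n) - ln (real d) \<le> real n / (4 * real d) - 1 + 2 * ln 2" by linarith
  have "real d * (1 + ln (real n) + ln (real T) - ln (real d))
      = real d + real d * (ln (real n) - ln (real d)) + real d * ln (real T)" by (simp add: algebra_simps)
  also have "\<dots> \<le> real d + real d * (real n / (4 * real d) - 1 + 2 * ln 2) + real d * ln (real T)"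
    using b by (intro add_mono mult_left_mono) auto
  also have "\<dots> = real n / 4 + 2 * real d * ln 2 + real d * ln (real T)" using d by (simp add: field_simps)
  finally have c: "real n * ln 2 \<le> real n / 4 + 2 * real d * ln 2 + real d * ln (real T)" using a by linarith
  have "real n * (1/4) \<le> real n * (ln 2 - 1/4)" using ln2_ge_two_thirds by (intro mult_left_mono) auto
  also have "\<dots> \<le> 2 * real d * ln 2 + real d * ln (real T)" using c by (simp add: algebra_simps)
  also have "\<dots> \<le> 3 * real d * ln (real T)" using T d by (simp add: algebra_simps)
  finally show ?thesis by simp
qed

lemma le_of_two_pow_le_sum_binomial:
  fixes n d T :: nat
  assumes T: "2 \<le> T" and pow: "2 ^ n \<le> (\<Sum>i\<le>d. (n * T) choose i)"
  shows "real n \<le> 12 * real d * ln (real T)"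
proof -
  have "ln 2 \<le> ln (real T)" using T by simp
  then have "1/2 \<le> ln (real T)" using ln2_ge_two_thirds by linarith
  consider "n = 0" | "d = 0" | "1 \<le> n" "1 \<le> d" "d \<le> n * T" | "n * T < d" by linarith
  then show ?thesis
  proof cases
    case 1
    have "0 \<le> real d * ln (real T)" using \<open>1/2 \<le> ln (real T)\<close> by (intro mult_nonneg_nonneg) auto
    then show ?thesis using 1 by simp
  next
    case 2
    with pow have "(2::nat) ^ n \<le> 1" by simp
    then have "n = 0" using one_less_power[of "2::nat" n] by linarith
    then show ?thesis using 2 by simp
  next
    case 3
    have "(2::real) ^ n \<le> real (\<Sum>i\<le>d. (n * T) choose i)"
      using pow by (metis of_nat_le_iff of_nat_numeral of_nat_power)
    also have "\<dots> \<le> (exp 1 * real (n * T) / real d) ^ d" using 3 by (intro sum_binomial_le_exp_pow)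
    finally show ?thesis using 3 T by (intro le_of_two_pow_le_exp_pow)
  next
    case 4
    have "n \<le> n * T" using T by simp
    with 4 have "real n \<le> real d" by linarith
    moreover have "real d * 1 \<le> real d * (12 * ln (real T))"
      using \<open>1/2 \<le> ln (real T)\<close> by (intro mult_left_mono) auto
    ultimately show ?thesis by simp
  qed
qed

theorem VCdim_CoT_loss_class_le:
  fixes F :: "thinker set"
  assumes "2 \<le> T" "VCdim UNIV F \<noteq> \<infinity>"
  shows "VCdim {(x, z). length z = T} (CoT_loss_class T F) \<noteq> \<infinity>"
    and "real (the_enat (VCdim {(x, z). length z = T} (CoT_loss_class T F)))
         \<le> 12 * real (the_enat (VCdim UNIV F)) * ln (real T)"
proof -
  define b where "b = 12 * real (the_enat (VCdim UNIV F)) * ln (real T)"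
  have "card C \<le> nat \<lfloor>b\<rfloor>"
    if "finite C" "C \<subseteq> {(x, z). length z = T}" "shatters (CoT_loss_class T F) C" for C
    using le_of_two_pow_le_sum_binomial[OF assms(1) two_pow_card_le_sum_binomial[OF that assms(2)]]
    by (simp add: b_def le_nat_floor)
  note bound = VCdim_le_if_card_shattered_le[where A="{(x, z). length z = T}" and H="CoT_loss_class T F", OF this]
  show "VCdim {(x, z). length z = T} (CoT_loss_class T F) \<noteq> \<infinity>" by (rule bound(1))
  have "0 \<le> b" using assms(1) by (simp add: b_def)
  then show "real (the_enat (VCdim {(x, z). length z = T} (CoT_loss_class T F))) \<le> b"
    using bound(2) by linarith
qed

theorem lemma9p4:
  shows "\<exists>c>0.
   (\<forall>(F :: thinker set) T m xs ys h \<delta> K adv sel.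
      0 < m \<longrightarrow> h \<in> e2e T ` F \<longrightarrow> (\<forall>i<m. ys i = h (xs i)) \<longrightarrow> 0 < \<delta> \<longrightarrow> \<delta> < 1 \<longrightarrow>
      VCdim UNIV (e2e T ` F) \<noteq> \<infinity> \<longrightarrow>
      (\<forall>hist S. adv hist S \<in> F \<and> e2e T (adv hist S) = h) \<longrightarrow>
      (\<forall>hist obs. (\<exists>g\<in>F. consistent T g obs) \<longrightarrow> sel hist obs \<in> F \<and> consistent T (sel hist obs) obs) \<longrightarrow>
      measure_pmf.prob
        (boost T m xs ys K \<delta> (nat \<lceil>c * real (the_enat (VCdim UNIV (e2e T ` F)))\<rceil>) adv sel)
        {es. \<forall>e\<in>set es. e \<le> 1/4} \<ge> 1 - \<delta> / 2)
 \<and> (\<forall>(F :: thinker set) T m xs ys h \<delta> K adv sel.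
      0 < m \<longrightarrow> h \<in> e2e T ` F \<longrightarrow> (\<forall>i<m. ys i = h (xs i)) \<longrightarrow> 0 < \<delta> \<longrightarrow> \<delta> < 1 \<longrightarrow>
      VCdim {(x, z). length z = T} (CoT_loss_class T F) \<noteq> \<infinity> \<longrightarrow>
      (\<forall>hist S. adv hist S \<in> F \<and> e2e T (adv hist S) = h) \<longrightarrow>
      (\<forall>hist S S'. adv hist S = adv hist S') \<longrightarrow>
      (\<forall>hist obs. (\<exists>g\<in>F. consistent T g obs) \<longrightarrow> sel hist obs \<in> F \<and> consistent T (sel hist obs) obs) \<longrightarrow>
      measure_pmf.prob
        (boost T m xs ys K \<delta>
           (nat \<lceil>c * real (the_enat (VCdim {(x, z). length z = T} (CoT_loss_class T F)))\<rceil>) adv sel)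
        {es. \<forall>e\<in>set es. e \<le> 1/4} \<ge> 1 - \<delta> / 2)
 \<and> (\<exists>C>0. \<forall>(F :: thinker set) T. 2 \<le> T \<longrightarrow> VCdim UNIV F \<noteq> \<infinity> \<longrightarrow>
      VCdim {(x, z). length z = T} (CoT_loss_class T F) \<noteq> \<infinity> \<and>
      real (the_enat (VCdim {(x, z). length z = T} (CoT_loss_class T F)))
        \<le> C * real (the_enat (VCdim UNIV F)) * ln (real T))"
  by (rule exI[of _ 160], intro conjI; (intro allI impI exI[of _ 12] conjI)?;
      (rule boost_success_e2e boost_success_CoT VCdim_CoT_loss_class_le; assumption | simp))

end
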